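(* Let $L'>0$ and let $\{|\tilde\psi(l)\rangle\}_{l\in[0,L']}$ be a continuous path of normalized pure states in a finite-dimensional Hilbert space. Assume there is a fixed $d\ge 0$ such that for all $l$ and all $\delta$ with $l,l+\delta\in[0,L']$, $$|\langle\tilde\psi(l)|\tilde\psi(l+\delta)\rangle|^2\ \ge\ 1-d^2\delta^2 .$$ Let $0<p<1$. Then the state $|\tilde\psi(L')\rangle$ can be prepared from $|\tilde\psi(0)\rangle$ with fidelity at least $p$ by $q=\lceil (L')^2d^2/(1-p)\rceil$ intermediate projective-measurement operations: there are points $0<l_1<\dots<l_q=L'$ such that, for any choice of projective-measurement operations $M_{l_j}$ onto $|\tilde\psi(l_j)\rangle$ (i.e. for any choice of the quantum operations $\mathcal E$ in their definition), the state $\rho_{\rm out}=M_{l_q}\circ\cdots\circ M_{l_1}(|\tilde\psi(0)\rangle\langle\tilde\psi(0)|)$ satisfies $\langle\tilde\psi(L')|\rho_{\rm out}|\tilde\psi(L')\rangle\ge p$.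
   Context: For a normalized state $|\tilde\psi(l)\rangle$ let $P_l=|\tilde\psi(l)\rangle\langle\tilde\psi(l)|$. A projective-measurement operation onto $|\tilde\psi(l)\rangle$ is a quantum operation (completely positive trace-preserving map) of the form $M_l(\rho)=P_l\rho P_l+\mathcal E\big((\mathbb 1-P_l)\rho(\mathbb 1-P_l)\big)$, where $\mathcal E$ is an arbitrary quantum operation (which may depend on $l$). *)

theory Defs
  imports "HOL-Analysis.Analysis"
begin

type_synonym 'n cmat = "complex^'n^'n"

definition cadj :: "'n::finite cmat \<Rightarrow> 'n cmat" where
  "cadj A = (\<chi> i j. cnj (A $ j $ i))"

definition braket :: "complex^'n::finite \<Rightarrow> complex^'n \<Rightarrow> complex" where
  "braket x y = (\<Sum>i\<in>UNIV. cnj (x $ i) * y $ i)"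

definition ketbra :: "complex^'n::finite \<Rightarrow> complex^'n \<Rightarrow> 'n cmat" where
  "ketbra x y = (\<chi> i j. x $ i * cnj (y $ j))"

definition quantum_operation :: "('n::finite cmat \<Rightarrow> 'n cmat) \<Rightarrow> bool" where
  "quantum_operation E \<longleftrightarrow>
     (\<exists>(K :: nat \<Rightarrow> 'n cmat) m.
        (\<forall>\<rho>. E \<rho> = (\<Sum>k<m. K k ** \<rho> ** cadj (K k))) \<and>
        (\<Sum>k<m. cadj (K k) ** K k) = mat 1)"

definition proj_meas_op ::
  "complex^'n::finite \<Rightarrow> ('n cmat \<Rightarrow> 'n cmat) \<Rightarrow> 'n cmat \<Rightarrow> 'n cmat" where
  "proj_meas_op \<psi> E \<rho> =
     (let P = ketbra \<psi> \<psi>; Q = mat 1 - P in P ** \<rho> ** P + E (Q ** \<rho> ** Q))"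

fun meas_seq ::
  "(real \<Rightarrow> complex^'n::finite) \<Rightarrow> (nat \<Rightarrow> real) \<Rightarrow> (nat \<Rightarrow> ('n cmat \<Rightarrow> 'n cmat))
     \<Rightarrow> nat \<Rightarrow> 'n cmat" where
  "meas_seq \<psi> l Es 0 = ketbra (\<psi> 0) (\<psi> 0)"
| "meas_seq \<psi> l Es (Suc j) = proj_meas_op (\<psi> (l (Suc j))) (Es (Suc j)) (meas_seq \<psi> l Es j)"

end

theory Submission
  imports Defs
begin

text \<open>Measuring onto \<open>\<psi>\<close> keeps at least the fraction \<open>|\<langle>\<psi>|\<phi>\<rangle>|\<^sup>2 \<langle>\<psi>|\<rho>|\<psi>\<rangle>\<close> of the weight of any
  state \<open>\<phi>\<close>, whatever happens on the orthogonal part, because that part contributes a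
  positive semidefinite operator. Along \<open>q\<close> equally spaced points \<open>L' j / q\<close> the consecutive
  overlaps are at least \<open>1 - d\<^sup>2 L'\<^sup>2 / q\<^sup>2\<close>, so the final fidelity is at least
  \<open>(1 - d\<^sup>2 L'\<^sup>2 / q\<^sup>2)\<^sup>q \<ge> 1 - d\<^sup>2 L'\<^sup>2 / q \<ge> p\<close> by Bernoulli's inequality and the choice of \<open>q\<close>.\<close>

text \<open>Only the real part of the quadratic form is constrained; no Hermiticity is required,
  since positivity of \<open>Re \<langle>v|A v\<rangle>\<close> is all the fidelity bound uses and it is preserved
  by Kraus maps.\<close>

definition psd :: "'n::finite cmat \<Rightarrow> bool" where
  "psd A \<longleftrightarrow> (\<forall>v. 0 \<le> Re (braket v (A *v v)))"

lemma braket_cnj: "braket y x = cnj (braket x y)"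
  by (simp add: braket_def mult.commute)

lemma braket_add_right: "braket x (y + z) = braket x y + braket x z"
  by (simp add: braket_def distrib_left sum.distrib)

lemma braket_scalar_mult_right: "braket x (c *s y) = c * braket x y"
  by (simp add: braket_def sum_distrib_left mult_ac)

lemma braket_sum_right: "braket x (sum f S) = (\<Sum>k\<in>S. braket x (f k))"
  by (induction S rule: infinite_finite_induct) (auto simp: braket_def distrib_left sum.distrib)

lemma braket_self: "braket x x = complex_of_real ((norm x)\<^sup>2)"
proof -
  have "braket x x = (\<Sum>i\<in>UNIV. complex_of_real ((norm (x $ i))\<^sup>2))"
    unfolding braket_def
    by (rule sum.cong) (simp_all only: of_real_power complex_norm_square[symmetric] mult.commute)
  also have "\<dots> = complex_of_real ((norm x)\<^sup>2)"
    by (simp add: norm_vec_def L2_set_def sum_nonneg flip: of_real_power of_real_sum)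
  finally show ?thesis .
qed

lemma braket_matrix_adjoint: "braket x (A *v y) = braket (cadj A *v x) y"
  unfolding braket_def cadj_def matrix_vector_mult_def
  by (simp add: sum_distrib_left sum_distrib_right mult_ac) (rule sum.swap)

lemma matrix_vector_mult_sum_left: "(sum A S) *v v = (\<Sum>k\<in>S. A k *v v)"
  by (induction S rule: infinite_finite_induct) (auto simp: matrix_vector_mult_add_rdistrib)

lemma ketbra_mult_vec: "ketbra a b *v w = braket b w *s a"
  unfolding ketbra_def braket_def matrix_vector_mult_def
  by (simp add: vec_eq_iff sum_distrib_left mult_ac)

lemma Re_braket_ketbra_self: "Re (braket \<phi> (ketbra a a *v \<phi>)) = (cmod (braket a \<phi>))\<^sup>2"
  by (simp only: ketbra_mult_vec braket_scalar_mult_right braket_cnj[of \<phi> a]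
      complex_mult_cnj cmod_power2 Re_complex_of_real)

lemma Re_ketbra_sandwich:
  "Re (braket \<phi> ((ketbra \<psi> \<psi> ** \<rho> ** ketbra \<psi> \<psi>) *v \<phi>))
     = (cmod (braket \<psi> \<phi>))\<^sup>2 * Re (braket \<psi> (\<rho> *v \<psi>))"
proof -
  have "braket \<phi> ((ketbra \<psi> \<psi> ** \<rho> ** ketbra \<psi> \<psi>) *v \<phi>)
      = (braket \<psi> \<phi> * cnj (braket \<psi> \<phi>)) * braket \<psi> (\<rho> *v \<psi>)"
    by (simp add: matrix_vector_mul_assoc[symmetric] matrix_mul_assoc ketbra_mult_vec
        vector_scalar_commute braket_scalar_mult_right braket_cnj[of \<phi> \<psi>] mult_ac)
  then show ?thesis
    by (simp add: complex_mult_cnj cmod_power2)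
qed

lemma psd_ketbra_self: "psd (ketbra a a)"
  by (simp add: psd_def Re_braket_ketbra_self)

lemma psd_add: "psd A \<Longrightarrow> psd B \<Longrightarrow> psd (A + B)"
  unfolding psd_def by (simp add: matrix_vector_mult_add_rdistrib braket_add_right)

lemma psd_sandwich:
  assumes "psd X"
  shows "psd (K ** X ** cadj K)"
proof -
  have "braket v ((K ** X ** cadj K) *v v) = braket (cadj K *v v) (X *v (cadj K *v v))" for v
    by (simp add: matrix_vector_mul_assoc[symmetric] matrix_mul_assoc braket_matrix_adjoint)
  then show ?thesis
    using assms unfolding psd_def by simp
qed

lemma quantum_operation_psd:
  fixes X :: "'n::finite cmat"
  assumes "quantum_operation E" "psd X"
  shows "psd (E X)"
proof -
  obtain K :: "nat \<Rightarrow> 'n cmat" and m where E: "\<And>\<rho>. E \<rho> = (\<Sum>k<m. K k ** \<rho> ** cadj (K k))"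
    using assms(1) unfolding quantum_operation_def by blast
  have "psd (K k ** X ** cadj (K k))" for k
    using psd_sandwich[OF assms(2)] .
  then show ?thesis
    unfolding psd_def E matrix_vector_mult_sum_left braket_sum_right Re_sum
    by (simp add: sum_nonneg)
qed

lemma proj_meas_op_eq:
  "proj_meas_op \<psi> E \<rho> = ketbra \<psi> \<psi> ** \<rho> ** ketbra \<psi> \<psi>
     + E ((mat 1 - ketbra \<psi> \<psi>) ** \<rho> ** cadj (mat 1 - ketbra \<psi> \<psi>))"
proof -
  have "cadj (mat 1 - ketbra \<psi> \<psi>) = mat 1 - ketbra \<psi> \<psi>"
    by (simp add: cadj_def ketbra_def vec_eq_iff mat_def)
  then show ?thesis
    by (simp add: proj_meas_op_def Let_def)
qed

lemma proj_meas_op_psd: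
  assumes "psd \<rho>" "quantum_operation E"
  shows "psd (proj_meas_op \<psi> E \<rho>)"
proof -
  have "cadj (ketbra \<psi> \<psi>) = ketbra \<psi> \<psi>"
    by (simp add: cadj_def ketbra_def vec_eq_iff)
  then show ?thesis
    unfolding proj_meas_op_eq
    by (metis assms psd_add psd_sandwich quantum_operation_psd)
qed

lemma proj_meas_op_weight_ge:
  assumes "psd \<rho>" "quantum_operation E"
  shows "(cmod (braket \<psi> \<phi>))\<^sup>2 * Re (braket \<psi> (\<rho> *v \<psi>))
           \<le> Re (braket \<phi> (proj_meas_op \<psi> E \<rho> *v \<phi>))"
proof -
  let ?Q = "mat 1 - ketbra \<psi> \<psi>"
  have "psd (E (?Q ** \<rho> ** cadj ?Q))"
    using assms by (simp add: psd_sandwich quantum_operation_psd)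
  then have "0 \<le> Re (braket \<phi> (E (?Q ** \<rho> ** cadj ?Q) *v \<phi>))"
    unfolding psd_def by blast
  then show ?thesis
    unfolding proj_meas_op_eq matrix_vector_mult_add_rdistrib braket_add_right plus_complex.sel
      Re_ketbra_sandwich
    by linarith
qed

lemma meas_seq_weight_ge:
  assumes "l 0 = 0" "0 \<le> a"
    and "\<forall>i<j. a \<le> (cmod (braket (\<psi> (l i)) (\<psi> (l (Suc i)))))\<^sup>2"
    and "\<forall>i\<in>{1..j}. quantum_operation (Es i)"
  shows "psd (meas_seq \<psi> l Es j) \<and>
    (\<forall>\<phi>. a ^ j * (cmod (braket (\<psi> (l j)) \<phi>))\<^sup>2 \<le> Re (braket \<phi> (meas_seq \<psi> l Es j *v \<phi>)))"
  using assms(3,4)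
proof (induction j)
  case 0
  show ?case
    using assms(1) by (simp add: psd_ketbra_self Re_braket_ketbra_self)
next
  case (Suc j)
  then have psd: "psd (meas_seq \<psi> l Es j)"
    and weight: "\<And>\<phi>. a ^ j * (cmod (braket (\<psi> (l j)) \<phi>))\<^sup>2 \<le> Re (braket \<phi> (meas_seq \<psi> l Es j *v \<phi>))"
    by auto
  have qo: "quantum_operation (Es (Suc j))"
    using Suc.prems(2) by auto
  have overlap: "a \<le> (cmod (braket (\<psi> (l j)) (\<psi> (l (Suc j)))))\<^sup>2"
    using Suc.prems(1) by blast
  have "a ^ Suc j * (cmod (braket (\<psi> (l (Suc j))) \<phi>))\<^sup>2
          \<le> Re (braket \<phi> (meas_seq \<psi> l Es (Suc j) *v \<phi>))" for \<phi>
  proof -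
    let ?c = "(cmod (braket (\<psi> (l (Suc j))) \<phi>))\<^sup>2"
    have "a ^ Suc j * ?c = ?c * (a ^ j * a)"
      by (simp add: mult_ac)
    also have "\<dots> \<le> ?c * (a ^ j * (cmod (braket (\<psi> (l j)) (\<psi> (l (Suc j)))))\<^sup>2)"
      using overlap assms(2) by (intro mult_left_mono) auto
    also have "\<dots> \<le> ?c * Re (braket (\<psi> (l (Suc j))) (meas_seq \<psi> l Es j *v \<psi> (l (Suc j))))"
      using weight by (intro mult_left_mono) auto
    also have "\<dots> \<le> Re (braket \<phi> (meas_seq \<psi> l Es (Suc j) *v \<phi>))"
      using proj_meas_op_weight_ge[OF psd qo] by simp
    finally show ?thesis .
  qed
  then show ?case
    using proj_meas_op_psd[OF psd qo] by simp
qed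

lemma power_one_minus_ge:
  fixes x p :: real
  assumes "real n * x \<le> 1 - p" "x \<le> 1"
  shows "p \<le> (1 - x) ^ n"
  using Bernoulli_inequality[of "- x" n] assms by simp

lemma equispaced_meas_seq_fidelity_ge:
  fixes \<psi> :: "real \<Rightarrow> complex^'n::finite"
  assumes "0 < q" "0 \<le> L'" "norm (\<psi> L') = 1" "0 < p"
    and overlap: "\<And>l \<delta>. l \<in> {0..L'} \<Longrightarrow> l + \<delta> \<in> {0..L'} \<Longrightarrow>
                    1 - d\<^sup>2 * \<delta>\<^sup>2 \<le> (cmod (braket (\<psi> l) (\<psi> (l + \<delta>))))\<^sup>2"
    and budget: "real q * (d\<^sup>2 * (L' / q)\<^sup>2) \<le> 1 - p"
    and "\<forall>j\<in>{1..q}. quantum_operation (Es j)"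
  shows "p \<le> Re (braket (\<psi> L') (meas_seq \<psi> (\<lambda>j. real j * (L' / q)) Es q *v \<psi> L'))"
proof -
  define \<delta> where "\<delta> = L' / q"
  define a where "a = 1 - d\<^sup>2 * \<delta>\<^sup>2"
  have "\<delta> \<ge> 0" "real q * \<delta> = L'"
    using assms(1,2) by (simp_all add: \<delta>_def)
  then have grid: "real i * \<delta> \<in> {0..L'}" if "i \<le> q" for i
    using that by (auto intro: mult_right_mono)
  have steps: "\<forall>i<q. a \<le> (cmod (braket (\<psi> (real i * \<delta>)) (\<psi> (real (Suc i) * \<delta>))))\<^sup>2"
  proof (intro allI impI)
    fix i assume "i < q"
    then have "real i * \<delta> \<in> {0..L'}" "real i * \<delta> + \<delta> \<in> {0..L'}"
      using grid[of i] grid[of "Suc i"] by (simp_all add: distrib_right add.commute)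
    then have "a \<le> (cmod (braket (\<psi> (real i * \<delta>)) (\<psi> (real i * \<delta> + \<delta>))))\<^sup>2"
      unfolding a_def by (rule overlap)
    then show "a \<le> (cmod (braket (\<psi> (real i * \<delta>)) (\<psi> (real (Suc i) * \<delta>))))\<^sup>2"
      by (simp add: algebra_simps)
  qed
  have "d\<^sup>2 * \<delta>\<^sup>2 \<le> real q * (d\<^sup>2 * \<delta>\<^sup>2)"
    using assms(1) mult_right_mono[of 1 "real q" "d\<^sup>2 * \<delta>\<^sup>2"] by simp
  then have "d\<^sup>2 * \<delta>\<^sup>2 \<le> 1"
    using budget assms(4) unfolding \<delta>_def by linarith
  then have "0 \<le> a" "p \<le> a ^ q"
    using power_one_minus_ge[of q "d\<^sup>2 * \<delta>\<^sup>2" p] budget unfolding a_def \<delta>_def by simp_all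
  moreover have "a ^ q * (cmod (braket (\<psi> (real q * \<delta>)) (\<psi> L')))\<^sup>2
                   \<le> Re (braket (\<psi> L') (meas_seq \<psi> (\<lambda>j. real j * \<delta>) Es q *v \<psi> L'))"
    using meas_seq_weight_ge[of "\<lambda>j. real j * \<delta>" a q \<psi> Es] steps assms(7) \<open>0 \<le> a\<close> by simp
  ultimately show ?thesis
    using \<open>real q * \<delta> = L'\<close> assms(3) by (simp add: braket_self \<delta>_def)
qed

theorem lemma1:
  fixes \<psi> :: "real \<Rightarrow> complex^'n::finite"
    and L' d p :: real
  assumes "L' > 0"
    and "continuous_on {0..L'} \<psi>"
    and "\<forall>l\<in>{0..L'}. norm (\<psi> l) = 1"
    and "d \<ge> 0"
    and "\<forall>l \<delta>. l \<in> {0..L'} \<and> l + \<delta> \<in> {0..L'} \<longrightarrow>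
            (cmod (braket (\<psi> l) (\<psi> (l + \<delta>))))\<^sup>2 \<ge> 1 - d\<^sup>2 * \<delta>\<^sup>2"
    and "0 < p" and "p < 1"
  shows "let q = nat \<lceil>L'\<^sup>2 * d\<^sup>2 / (1 - p)\<rceil> in
    \<exists>l :: nat \<Rightarrow> real.
      (q > 0 \<longrightarrow> 0 < l 1 \<and> l q = L') \<and>
      (\<forall>j. 1 \<le> j \<and> j < q \<longrightarrow> l j < l (Suc j)) \<and>
      (\<forall>Es :: nat \<Rightarrow> ('n cmat \<Rightarrow> 'n cmat).
         (\<forall>j\<in>{1..q}. quantum_operation (Es j)) \<longrightarrow>
         Re (braket (\<psi> L') (meas_seq \<psi> l Es q *v \<psi> L')) \<ge> p)"
proof -
  define q where "q = nat \<lceil>L'\<^sup>2 * d\<^sup>2 / (1 - p)\<rceil>"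
  have q_ge: "L'\<^sup>2 * d\<^sup>2 / (1 - p) \<le> real q"
    unfolding q_def by (rule real_nat_ceiling_ge)
  have overlap: "\<And>l \<delta>. l \<in> {0..L'} \<Longrightarrow> l + \<delta> \<in> {0..L'} \<Longrightarrow>
                   1 - d\<^sup>2 * \<delta>\<^sup>2 \<le> (cmod (braket (\<psi> l) (\<psi> (l + \<delta>))))\<^sup>2"
    using assms(5) by blast
  show ?thesis
  proof (cases "q = 0")
    case True
    then have "L'\<^sup>2 * d\<^sup>2 \<le> 0"
      using q_ge assms(7) by (simp add: divide_le_0_iff)
    then have "d = 0"
      using assms(1) by (simp add: mult_le_0_iff)
    then have "1 \<le> (cmod (braket (\<psi> 0) (\<psi> L')))\<^sup>2"
      using overlap[of 0 L'] assms(1) by simp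
    then show ?thesis
      unfolding Let_def q_def[symmetric] using True assms(7) by (intro exI[of _ "\<lambda>_. 0"]) (simp add: Re_braket_ketbra_self)
  next
    case False
    define l :: "nat \<Rightarrow> real" where "l = (\<lambda>j. real j * (L' / q))"
    have budget: "real q * (d\<^sup>2 * (L' / q)\<^sup>2) \<le> 1 - p"
      using q_ge False assms(7)
      by (simp add: power_divide field_simps power2_eq_square)
    have "p \<le> Re (braket (\<psi> L') (meas_seq \<psi> l Es q *v \<psi> L'))"
      if "\<forall>j\<in>{1..q}. quantum_operation (Es j)" for Es
      unfolding l_def
      using equispaced_meas_seq_fidelity_ge[OF _ _ _ _ overlap budget that] False assms(1,3,6)
      by simp
    moreover have "0 < l 1" "l q = L'"
      using False assms(1) by (simp_all add: l_def)
    moreover have "l j < l (Suc j)" for j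
      using False assms(1) unfolding l_def by (intro mult_strict_right_mono) auto
    ultimately show ?thesis
      unfolding Let_def q_def[symmetric] by blast
  qed
qed

end
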